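(* Let $n\ge2$, let $X_1,\dots,X_n$ be infinite dimensional Hilbert spaces and $D_k\in\mathcal{B}(X_k)$. Then for every $A\in\mathcal{B}_n$, $$\bigcup_{k=1}^n\sigma(D_k)=\sigma(T_n^d(A))\cup\Delta,$$ where $\Delta$ is the set of $\lambda\in\mathbb{C}$ such that either (a) there is $k\in\{2,\dots,n-1\}$ with $\big(\lambda\in\sigma_r(D_k)$ and $\beta(D_k-\lambda)\le\sum_{s=k+1}^n\alpha(D_s-\lambda)\big)$ or $\big(\lambda\in\sigma_l(D_k)$ and $\alpha(D_k-\lambda)\le\sum_{s=1}^{k-1}\beta(D_s-\lambda)\big)$; or (b) $0<\beta(D_1-\lambda)\le\sum_{s=2}^n\alpha(D_s-\lambda)$ or $0<\alpha(D_n-\lambda)\le\sum_{s=1}^{n-1}\beta(D_s-\lambda)$. In particular, if $\Delta=\emptyset$ then $\bigcup_{k=1}^n\sigma(D_k)=\sigma(T_n^d(A))$ for every $A\in\mathcal{B}_n$.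
   Context: For a bounded operator $T$, $\alpha(T)=\dim\mathcal{N}(T)$, $\beta(T)=\operatorname{codim}\mathcal{R}(T)$, values in $\{0,1,\dots\}\cup\{\infty\}$, sums and comparisons taken in this extended set. $T$ is left invertible if $\alpha(T)=0$ and $\mathcal{R}(T)$ is closed and complemented, right invertible if $\beta(T)=0$ and $\mathcal{N}(T)$ is complemented, invertible if both. $\sigma_l,\sigma_r,\sigma$ denote the sets of $\lambda\in\mathbb{C}$ with $\lambda-T$ not left invertible, not right invertible, not invertible. $\mathcal{B}_n$ is the set of tuples $A=(A_{ij})_{1\le i<j\le n}$, $A_{ij}\in\mathcal{B}(X_j,X_i)$; $T_n^d(A)$ is the upper triangular operator matrix on $X_1\oplus\cdots\oplus X_n$ with diagonal $D_1,\dots,D_n$, entries $A_{ij}$ above the diagonal and zeros below. *)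

theory Defs
  imports "HOL-Analysis.Analysis" "HOL-Library.Extended_Nat"
begin

class complex_vector = real_vector +
  fixes scaleC :: "complex \<Rightarrow> 'a \<Rightarrow> 'a"
  assumes scaleC_add_right: "scaleC a (x + y) = scaleC a x + scaleC a y"
    and scaleC_add_left: "scaleC (a + b) x = scaleC a x + scaleC b x"
    and scaleC_scaleC: "scaleC a (scaleC b x) = scaleC (a * b) x"
    and scaleC_one: "scaleC 1 x = x"
    and scaleR_scaleC: "scaleR r x = scaleC (complex_of_real r) x"

class complex_normed_vector = complex_vector + real_normed_vector +
  assumes norm_scaleC: "norm (scaleC a x) = cmod a * norm x"

class chilbert_space = complex_normed_vector + complete_space +
  fixes cinner :: "'a \<Rightarrow> 'a \<Rightarrow> complex"
  assumes cinner_commute: "cinner x y = cnj (cinner y x)"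
    and cinner_add_left: "cinner (x + y) z = cinner x z + cinner y z"
    and cinner_scaleC_left: "cinner (scaleC r x) y = cnj r * cinner x y"
    and cinner_self_nonneg: "0 \<le> Re (cinner x x)"
    and cinner_eq_zero_iff: "cinner x x = 0 \<longleftrightarrow> x = 0"
    and norm_eq_sqrt_cinner: "norm x = sqrt (Re (cinner x x))"

definition csubspace :: "'a::complex_vector set \<Rightarrow> bool" where
  "csubspace M \<longleftrightarrow> 0 \<in> M \<and> (\<forall>x\<in>M. \<forall>y\<in>M. x + y \<in> M) \<and> (\<forall>c. \<forall>x\<in>M. scaleC c x \<in> M)"

definition closed_csubspace :: "'a::complex_normed_vector set \<Rightarrow> bool" where
  "closed_csubspace M \<longleftrightarrow> csubspace M \<and> closed M"

definition cspan :: "'a::complex_vector set \<Rightarrow> 'a set" where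
  "cspan S = {(\<Sum>x\<in>F. scaleC (c x) x) | F c. finite F \<and> F \<subseteq> S}"

definition setsum :: "'a::ab_group_add set \<Rightarrow> 'a set \<Rightarrow> 'a set" where
  "setsum M N = {m + k | m k. m \<in> M \<and> k \<in> N}"

definition codim_in :: "'a::complex_vector set \<Rightarrow> 'a set \<Rightarrow> enat" where
  "codim_in R N =
     (if \<exists>F. finite F \<and> F \<subseteq> N \<and> setsum R (cspan F) = N
      then enat (LEAST m. \<exists>F. finite F \<and> F \<subseteq> N \<and> card F = m \<and> setsum R (cspan F) = N)
      else \<infinity>)"

definition cdim :: "'a::complex_vector set \<Rightarrow> enat" where
  "cdim M = codim_in {0} M"

definition infinite_dim :: "'a::complex_vector set \<Rightarrow> bool" where
  "infinite_dim M \<longleftrightarrow> cdim M = \<infinity>"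

definition complemented_in :: "'a::complex_normed_vector set \<Rightarrow> 'a set \<Rightarrow> bool" where
  "complemented_in M N \<longleftrightarrow>
     (\<exists>C. closed_csubspace C \<and> C \<subseteq> N \<and> M \<inter> C = {0} \<and> setsum M C = N)"

definition bounded_clinear_on :: "'a::complex_normed_vector set \<Rightarrow> 'a set \<Rightarrow> ('a \<Rightarrow> 'a) \<Rightarrow> bool" where
  "bounded_clinear_on M N f \<longleftrightarrow>
     (\<forall>x\<in>M. f x \<in> N) \<and> (\<forall>x\<in>M. \<forall>y\<in>M. f (x + y) = f x + f y) \<and>
     (\<forall>c. \<forall>x\<in>M. f (scaleC c x) = scaleC c (f x)) \<and>
     (\<exists>K. \<forall>x\<in>M. norm (f x) \<le> K * norm x)"

definition kernel_on :: "'a::complex_vector set \<Rightarrow> ('a \<Rightarrow> 'a) \<Rightarrow> 'a set" where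
  "kernel_on M T = {x \<in> M. T x = 0}"

definition alpha_op :: "'a::complex_vector set \<Rightarrow> ('a \<Rightarrow> 'a) \<Rightarrow> enat" where
  "alpha_op M T = cdim (kernel_on M T)"

definition beta_op :: "'a::complex_vector set \<Rightarrow> 'a set \<Rightarrow> ('a \<Rightarrow> 'a) \<Rightarrow> enat" where
  "beta_op M N T = codim_in (T ` M) N"

definition left_invertible_on :: "'a::complex_normed_vector set \<Rightarrow> 'a set \<Rightarrow> ('a \<Rightarrow> 'a) \<Rightarrow> bool" where
  "left_invertible_on M N T \<longleftrightarrow>
     alpha_op M T = 0 \<and> closed (T ` M) \<and> complemented_in (T ` M) N"

definition right_invertible_on :: "'a::complex_normed_vector set \<Rightarrow> 'a set \<Rightarrow> ('a \<Rightarrow> 'a) \<Rightarrow> bool" where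
  "right_invertible_on M N T \<longleftrightarrow> beta_op M N T = 0 \<and> complemented_in (kernel_on M T) M"

definition invertible_on :: "'a::complex_normed_vector set \<Rightarrow> 'a set \<Rightarrow> ('a \<Rightarrow> 'a) \<Rightarrow> bool" where
  "invertible_on M N T \<longleftrightarrow> left_invertible_on M N T \<and> right_invertible_on M N T"

definition lam_minus :: "complex \<Rightarrow> ('a::complex_vector \<Rightarrow> 'a) \<Rightarrow> 'a \<Rightarrow> 'a" where
  "lam_minus \<mu> T = (\<lambda>x. scaleC \<mu> x - T x)"

definition minus_lam :: "('a::complex_vector \<Rightarrow> 'a) \<Rightarrow> complex \<Rightarrow> 'a \<Rightarrow> 'a" where
  "minus_lam T \<mu> = (\<lambda>x. T x - scaleC \<mu> x)"

definition spec_l :: "'a::complex_normed_vector set \<Rightarrow> ('a \<Rightarrow> 'a) \<Rightarrow> complex set" where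
  "spec_l M T = {\<mu>. \<not> left_invertible_on M M (lam_minus \<mu> T)}"

definition spec_r :: "'a::complex_normed_vector set \<Rightarrow> ('a \<Rightarrow> 'a) \<Rightarrow> complex set" where
  "spec_r M T = {\<mu>. \<not> right_invertible_on M M (lam_minus \<mu> T)}"

definition spec :: "'a::complex_normed_vector set \<Rightarrow> ('a \<Rightarrow> 'a) \<Rightarrow> complex set" where
  "spec M T = {\<mu>. \<not> invertible_on M M (lam_minus \<mu> T)}"

text \<open>The Hilbert direct sum X_1 \<oplus> ... \<oplus> X_n is realised as the internal orthogonal sum of
  mutually orthogonal closed subspaces X_1, ..., X_n of an ambient Hilbert space.\<close>
definition orth_dsum :: "nat \<Rightarrow> (nat \<Rightarrow> 'a::complex_vector set) \<Rightarrow> 'a set" where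
  "orth_dsum n X = {(\<Sum>k=1..n. x k) | x. \<forall>k\<in>{1..n}. x k \<in> X k}"

definition components :: "nat \<Rightarrow> (nat \<Rightarrow> 'a::complex_vector set) \<Rightarrow> 'a \<Rightarrow> nat \<Rightarrow> 'a" where
  "components n X y = (THE x. (\<forall>k\<in>{1..n}. x k \<in> X k) \<and> (\<forall>k. k \<notin> {1..n} \<longrightarrow> x k = 0)
                              \<and> y = (\<Sum>k=1..n. x k))"

text \<open>\<B>_n: tuples (A_ij)_{1\<le>i<j\<le>n} with A_ij \<in> \<B>(X_j, X_i) (entries with i \<ge> j are never used).\<close>
definition Bn :: "nat \<Rightarrow> (nat \<Rightarrow> 'a::complex_normed_vector set) \<Rightarrow> (nat \<Rightarrow> nat \<Rightarrow> 'a \<Rightarrow> 'a) set" where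
  "Bn n X = {A. \<forall>i j. 1 \<le> i \<and> i < j \<and> j \<le> n \<longrightarrow> bounded_clinear_on (X j) (X i) (A i j)}"

definition Tnd :: "nat \<Rightarrow> (nat \<Rightarrow> 'a::complex_vector set) \<Rightarrow> (nat \<Rightarrow> 'a \<Rightarrow> 'a)
                    \<Rightarrow> (nat \<Rightarrow> nat \<Rightarrow> 'a \<Rightarrow> 'a) \<Rightarrow> 'a \<Rightarrow> 'a" where
  "Tnd n X D A y = (let x = components n X y in
      (\<Sum>i=1..n. D i (x i) + (\<Sum>j\<in>{i<..n}. A i j (x j))))"

definition Delta :: "nat \<Rightarrow> (nat \<Rightarrow> 'a::complex_normed_vector set) \<Rightarrow> (nat \<Rightarrow> 'a \<Rightarrow> 'a) \<Rightarrow> complex set" where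
  "Delta n X D = {\<mu>.
     (\<exists>k\<in>{2..n-1}.
        (\<mu> \<in> spec_r (X k) (D k) \<and>
           beta_op (X k) (X k) (minus_lam (D k) \<mu>)
             \<le> (\<Sum>s=k+1..n. alpha_op (X s) (minus_lam (D s) \<mu>)))
      \<or> (\<mu> \<in> spec_l (X k) (D k) \<and>
           alpha_op (X k) (minus_lam (D k) \<mu>)
             \<le> (\<Sum>s=1..k-1. beta_op (X s) (X s) (minus_lam (D s) \<mu>))))
   \<or> (0 < beta_op (X 1) (X 1) (minus_lam (D 1) \<mu>) \<and>
        beta_op (X 1) (X 1) (minus_lam (D 1) \<mu>) \<le> (\<Sum>s=2..n. alpha_op (X s) (minus_lam (D s) \<mu>)))
   \<or> (0 < alpha_op (X n) (minus_lam (D n) \<mu>) \<and>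
        alpha_op (X n) (minus_lam (D n) \<mu>) \<le> (\<Sum>s=1..n-1. beta_op (X s) (X s) (minus_lam (D s) \<mu>)))}"

end

theory Submission
  imports Defs
begin

text \<open>Put \<open>E_k = D_k - \<mu>\<close>. Two dimension counts drive the argument: the kernel of the
  diagonal block of \<open>T - \<mu>\<close> on the coordinates \<open>k+1, \<dots>, n\<close> has dimension at most
  \<open>\<Sum>_{s>k} \<alpha>(E_s)\<close>, and the range of its upper left corner on the coordinates \<open>1, \<dots>, k\<close>
  has codimension at most \<open>\<Sum>_{s\<le>k} \<beta>(E_s)\<close>; both follow by peeling off one coordinate at a
  time. Hence \<open>T - \<mu>\<close> is invertible when every \<open>E_k\<close> is. Conversely, if \<open>T - \<mu>\<close> is onto,
  a complement of the range of \<open>E_k\<close> is spanned by the image of the kernel of the block below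
  \<open>k\<close>, so \<open>\<beta>(E_k) \<le> \<Sum>_{s>k} \<alpha>(E_s)\<close>; if it is one-to-one, \<open>ker E_k\<close> injects, through the
  entries above \<open>E_k\<close>, into the cokernel of the corner of size \<open>k - 1\<close>, so
  \<open>\<alpha>(E_k) \<le> \<Sum>_{s<k} \<beta>(E_s)\<close>. Thus a non-invertible \<open>E_k\<close> with \<open>T - \<mu>\<close> invertible gives
  \<open>\<mu> \<in> \<Delta>\<close>, and conversely every \<open>\<mu> \<in> \<Delta>\<close> makes some \<open>E_k\<close> non-invertible.\<close>

section \<open>Complex linear algebra\<close>

global_interpretation cv: vector_space "scaleC :: complex \<Rightarrow> 'a \<Rightarrow> 'a::complex_vector"
  by unfold_locales (auto simp: scaleC_add_right scaleC_add_left scaleC_scaleC scaleC_one)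

lemma cspan_eq_span: "cspan S = cv.span S"
  unfolding cspan_def cv.span_explicit by auto

lemma csubspace_iff_subspace: "csubspace M = cv.subspace M"
  unfolding csubspace_def cv.subspace_def by auto

lemma setsum_zero_right [simp]: "setsum R {0} = R"
  unfolding setsum_def by auto

lemma setsum_zero_left [simp]: "setsum {0} N = N"
  unfolding setsum_def by auto

lemma scaleC_minus_one: "scaleC (-1) x = - (x::'a::complex_vector)"
  by (metis cv.scale_minus_left scaleC_one)

lemma csubspace_0: "csubspace K \<Longrightarrow> 0 \<in> K"
  by (simp add: csubspace_def)

lemma csubspace_add: "csubspace K \<Longrightarrow> x \<in> K \<Longrightarrow> y \<in> K \<Longrightarrow> x + y \<in> K"
  by (simp add: csubspace_def)

lemma csubspace_scaleC: "csubspace K \<Longrightarrow> x \<in> K \<Longrightarrow> scaleC c x \<in> K"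
  by (simp add: csubspace_def)

lemma csubspace_uminus: "csubspace K \<Longrightarrow> x \<in> K \<Longrightarrow> - x \<in> K"
  using csubspace_scaleC[of K x "-1"] by (simp add: scaleC_minus_one)

lemma csubspace_diff: "csubspace K \<Longrightarrow> x \<in> K \<Longrightarrow> y \<in> K \<Longrightarrow> x - y \<in> K"
  using csubspace_add[of K x "-y"] csubspace_uminus[of K y] by simp

lemma csubspace_sum: "csubspace K \<Longrightarrow> (\<And>i. i \<in> I \<Longrightarrow> f i \<in> K) \<Longrightarrow> sum f I \<in> K"
  using cv.subspace_sum[of K I f] by (simp add: csubspace_iff_subspace)

lemma cspan_subset_csubspace: "csubspace K \<Longrightarrow> F \<subseteq> K \<Longrightarrow> cspan F \<subseteq> K"
  by (simp add: cspan_eq_span csubspace_iff_subspace cv.span_minimal)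

lemma codim_in_le_card:
  assumes "finite G" "G \<subseteq> N" "setsum R (cspan G) = N"
  shows "codim_in R N \<le> enat (card G)"
proof -
  have "(LEAST m. \<exists>F. finite F \<and> F \<subseteq> N \<and> card F = m \<and> setsum R (cspan F) = N) \<le> card G"
    by (rule Least_le) (use assms in auto)
  then show ?thesis using assms unfolding codim_in_def by auto
qed

lemma codim_in_enatE:
  assumes "codim_in R N = enat m"
  obtains F where "finite F" "F \<subseteq> N" "card F = m" "setsum R (cspan F) = N"
proof -
  let ?P = "\<lambda>m. \<exists>F. finite F \<and> F \<subseteq> N \<and> card F = m \<and> setsum R (cspan F) = N"
  have ex: "\<exists>F. finite F \<and> F \<subseteq> N \<and> setsum R (cspan F) = N"
    using assms unfolding codim_in_def by (auto split: if_splits)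
  then have "m = (LEAST m. ?P m)"
    using assms unfolding codim_in_def by auto
  moreover have "?P (LEAST m. ?P m)"
    by (rule LeastI_ex) (use ex in auto)
  ultimately show ?thesis using that by auto
qed

lemma cdim_enatE:
  assumes "cdim M = enat m"
  obtains F where "finite F" "F \<subseteq> M" "card F = m" "cspan F = M"
  using codim_in_enatE[OF assms[unfolded cdim_def]] by auto

lemma cdim_le_card:
  assumes "csubspace M" "M \<subseteq> cspan H" "finite H"
  shows "cdim M \<le> enat (card H)"
proof -
  obtain B where B: "B \<subseteq> M" "cv.independent B" "M \<subseteq> cv.span B"
    using cv.basis_exists by metis
  have B_bound: "finite B" "card B \<le> card H"
    using cv.independent_span_bound[OF assms(3) B(2)] B(1) assms(2) by (auto simp: cspan_eq_span)
  have "cspan B = M"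
    using cv.span_subspace[OF B(1) B(3)] assms(1) by (simp add: cspan_eq_span csubspace_iff_subspace)
  then have "cdim M \<le> enat (card B)"
    unfolding cdim_def using B_bound B(1) by (intro codim_in_le_card) auto
  then show ?thesis using B_bound(2) by (meson enat_ord_simps(1) order_trans)
qed

lemma codim_in_eq_0_iff:
  assumes "0 \<in> R" "R \<subseteq> N"
  shows "codim_in R N = 0 \<longleftrightarrow> R = N"
proof
  assume "codim_in R N = 0"
  then obtain F where "card F = 0" "finite F" "setsum R (cspan F) = N"
    using codim_in_enatE[of R N 0] by (metis zero_enat_def)
  then show "R = N" by (simp add: cspan_eq_span)
next
  assume "R = N"
  then have "codim_in R N \<le> enat (card ({}::'a set))"
    by (intro codim_in_le_card) (auto simp: cspan_eq_span)
  then show "codim_in R N = 0" by (simp add: zero_enat_def[symmetric])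
qed

lemma cdim_eq_0_iff: "cdim M = 0 \<longleftrightarrow> M = {0}"
proof
  assume "cdim M = 0"
  then obtain F where "card F = 0" "finite F" "cspan F = M"
    using cdim_enatE[of M 0] by (metis zero_enat_def)
  then show "M = {0}" by (simp add: cspan_eq_span)
next
  assume "M = {0}"
  then show "cdim M = 0"
    unfolding cdim_def by (subst codim_in_eq_0_iff) auto
qed

definition clinear_on :: "'a::complex_vector set \<Rightarrow> ('a \<Rightarrow> 'a) \<Rightarrow> bool" where
  "clinear_on K f \<longleftrightarrow>
     (\<forall>x\<in>K. \<forall>y\<in>K. f (x + y) = f x + f y) \<and> (\<forall>c. \<forall>x\<in>K. f (scaleC c x) = scaleC c (f x))"

lemma clinear_on_add: "clinear_on K f \<Longrightarrow> x \<in> K \<Longrightarrow> y \<in> K \<Longrightarrow> f (x + y) = f x + f y"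
  by (simp add: clinear_on_def)

lemma clinear_on_scaleC: "clinear_on K f \<Longrightarrow> x \<in> K \<Longrightarrow> f (scaleC c x) = scaleC c (f x)"
  by (simp add: clinear_on_def)

lemma clinear_on_0: "clinear_on K f \<Longrightarrow> 0 \<in> K \<Longrightarrow> f 0 = 0"
  using clinear_on_add[of K f 0 0] by simp

lemma clinear_on_uminus: "clinear_on K f \<Longrightarrow> x \<in> K \<Longrightarrow> f (- x) = - f x"
  using clinear_on_scaleC[of K f x "-1"] by (simp add: scaleC_minus_one)

lemma clinear_on_diff:
  "clinear_on K f \<Longrightarrow> csubspace K \<Longrightarrow> x \<in> K \<Longrightarrow> y \<in> K \<Longrightarrow> f (x - y) = f x - f y"
  using clinear_on_add[of K f "x - y" y] csubspace_diff[of K x y] by (simp add: algebra_simps)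

lemma clinear_on_subset: "clinear_on M f \<Longrightarrow> K \<subseteq> M \<Longrightarrow> clinear_on K f"
  unfolding clinear_on_def by blast

lemma clinear_on_sum_scaleC:
  assumes "csubspace K" "clinear_on K f" "finite t" "\<And>b. b \<in> t \<Longrightarrow> h b \<in> K"
  shows "f (\<Sum>b\<in>t. scaleC (c b) (h b)) = (\<Sum>b\<in>t. scaleC (c b) (f (h b)))"
  using assms(3,4)
proof (induction t rule: finite_induct)
  case empty
  then show ?case using clinear_on_0[OF assms(2) csubspace_0[OF assms(1)]] by simp
next
  case (insert a t)
  have "(\<Sum>b\<in>t. scaleC (c b) (h b)) \<in> K" "scaleC (c a) (h a) \<in> K"
    using insert by (auto intro!: csubspace_sum[OF assms(1)] csubspace_scaleC[OF assms(1)])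
  then show ?case
    using insert clinear_on_add[OF assms(2)] clinear_on_scaleC[OF assms(2)] by simp
qed

lemma csubspace_image:
  assumes "csubspace K" "clinear_on K f"
  shows "csubspace (f ` K)"
  unfolding csubspace_def
proof (intro conjI ballI allI)
  show "0 \<in> f ` K"
    using clinear_on_0[OF assms(2) csubspace_0[OF assms(1)]] csubspace_0[OF assms(1)] by force
next
  fix x y assume "x \<in> f ` K" "y \<in> f ` K"
  then obtain a b where "a \<in> K" "b \<in> K" "x = f a" "y = f b" by auto
  then show "x + y \<in> f ` K"
    using clinear_on_add[OF assms(2)] csubspace_add[OF assms(1)] by (metis image_eqI)
next
  fix c x assume "x \<in> f ` K"
  then obtain a where "a \<in> K" "x = f a" by auto
  then show "scaleC c x \<in> f ` K"
    using clinear_on_scaleC[OF assms(2)] csubspace_scaleC[OF assms(1)] by (metis image_eqI)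
qed

lemma clinear_on_cspan_image:
  assumes "csubspace K" "clinear_on K f" "F \<subseteq> K" "v \<in> cspan F"
  shows "f v \<in> cspan (f ` F)"
proof -
  obtain t c where t: "finite t" "t \<subseteq> F" "v = (\<Sum>b\<in>t. scaleC (c b) b)"
    using assms(4) unfolding cspan_def by auto
  have "f v = (\<Sum>b\<in>t. scaleC (c b) (f b))"
    using t assms by (subst t(3), intro clinear_on_sum_scaleC[OF assms(1,2)]) auto
  also have "\<dots> \<in> cv.span (f ` F)"
    using t by (intro cv.span_sum cv.span_scale cv.span_base) auto
  finally show ?thesis by (simp add: cspan_eq_span)
qed

section \<open>Dimension estimates\<close>

lemma subset_cspan_lift_Un_kernel:
  assumes K: "csubspace K" and lin: "clinear_on K \<pi>" and B: "finite B" "\<pi> ` K \<subseteq> cv.span B"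
    and lift: "\<And>b. b \<in> B \<Longrightarrow> g b \<in> K \<and> \<pi> (g b) = b"
    and Z: "cspan Z = {x\<in>K. \<pi> x = 0}"
  shows "K \<subseteq> cspan (g ` B \<union> Z)"
proof
  fix y assume y: "y \<in> K"
  obtain u where u: "\<pi> y = (\<Sum>v\<in>B. scaleC (u v) v)"
    using B y cv.span_finite[of B] by auto
  define w where "w = (\<Sum>b\<in>B. scaleC (u b) (g b))"
  have wK: "w \<in> K"
    unfolding w_def using lift by (intro csubspace_sum[OF K] csubspace_scaleC[OF K]) auto
  have "\<pi> w = (\<Sum>b\<in>B. scaleC (u b) (\<pi> (g b)))"
    unfolding w_def using lift B by (intro clinear_on_sum_scaleC[OF K lin]) auto
  also have "\<dots> = \<pi> y" using u lift by simp
  finally have "y - w \<in> {x\<in>K. \<pi> x = 0}"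
    using clinear_on_diff[OF lin K y wK] csubspace_diff[OF K y wK] by simp
  then have "y - w \<in> cv.span (g ` B \<union> Z)"
    using Z cv.span_mono[of Z "g ` B \<union> Z"] by (auto simp: cspan_eq_span)
  moreover have "w \<in> cv.span (g ` B \<union> Z)"
    unfolding w_def by (intro cv.span_sum cv.span_scale cv.span_base) auto
  ultimately have "(y - w) + w \<in> cv.span (g ` B \<union> Z)" by (rule cv.span_add)
  then show "y \<in> cspan (g ` B \<union> Z)" by (simp add: cspan_eq_span)
qed

lemma cdim_le_add_cdim_kernel:
  assumes K: "csubspace K" and lin: "clinear_on K \<pi>" and img: "\<pi> ` K \<subseteq> P" and P: "csubspace P"
  shows "cdim K \<le> cdim P + cdim {x\<in>K. \<pi> x = 0}"
proof (cases "cdim P")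
  case (enat p)
  show ?thesis
  proof (cases "cdim {x\<in>K. \<pi> x = 0}")
    case (enat z)
    obtain Fp where Fp: "finite Fp" "card Fp = p" "cspan Fp = P"
      using cdim_enatE[OF \<open>cdim P = enat p\<close>] by metis
    obtain Z where Z: "finite Z" "card Z = z" "cspan Z = {x\<in>K. \<pi> x = 0}"
      using cdim_enatE[OF enat] by metis
    obtain B where B: "B \<subseteq> \<pi> ` K" "cv.independent B" "\<pi> ` K \<subseteq> cv.span B"
      using cv.basis_exists by metis
    have B_bound: "finite B" "card B \<le> p"
      using cv.independent_span_bound[OF Fp(1) B(2)] B(1) img Fp by (auto simp: cspan_eq_span)
    have "\<forall>b\<in>B. \<exists>y. y \<in> K \<and> \<pi> y = b" using B(1) by auto
    then obtain g where lift: "\<And>b. b \<in> B \<Longrightarrow> g b \<in> K \<and> \<pi> (g b) = b" by metis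
    have "K \<subseteq> cspan (g ` B \<union> Z)"
      using subset_cspan_lift_Un_kernel[OF K lin B_bound(1) B(3) lift Z(3)] by simp
    then have "cdim K \<le> enat (card (g ` B \<union> Z))"
      using B_bound Z by (intro cdim_le_card[OF K]) auto
    also have "\<dots> \<le> enat (p + z)"
      using card_Un_le[of "g ` B" Z] card_image_le[OF B_bound(1), of g] B_bound(2) Z(2) by simp
    finally show ?thesis using \<open>cdim P = enat p\<close> enat by simp
  qed simp
qed simp

lemma independent_image_modulo:
  assumes K: "csubspace K" and lin: "clinear_on K \<psi>" and R: "csubspace R"
    and inj: "\<forall>x\<in>K. \<psi> x \<in> R \<longrightarrow> x = 0"
    and I: "I \<subseteq> K" "finite I" "cv.independent I"
    and rg: "\<And>i. i \<in> I \<Longrightarrow> r i \<in> R \<and> \<psi> i = r i + g i" and inj_g: "inj_on g I"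
  shows "cv.independent (g ` I)"
proof
  assume "cv.dependent (g ` I)"
  then obtain t u v0 where t: "finite t" "t \<subseteq> g ` I" "(\<Sum>v\<in>t. scaleC (u v) v) = 0"
      "v0 \<in> t" "u v0 \<noteq> 0"
    unfolding cv.dependent_explicit by blast
  define J where "J = {i\<in>I. g i \<in> t}"
  have tJ: "t = g ` J" using t(2) unfolding J_def by auto
  have J: "finite J" "J \<subseteq> I" using I(2) unfolding J_def by auto
  have inj_J: "inj_on g J" using inj_on_subset[OF inj_g J(2)] .
  have sum_g: "(\<Sum>i\<in>J. scaleC (u (g i)) (g i)) = 0"
    using t(3) unfolding tJ by (simp add: sum.reindex[OF inj_J])
  define x where "x = (\<Sum>i\<in>J. scaleC (u (g i)) i)"
  have xK: "x \<in> K"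
    unfolding x_def using J I(1) by (intro csubspace_sum[OF K] csubspace_scaleC[OF K]) auto
  have "\<psi> x = (\<Sum>i\<in>J. scaleC (u (g i)) (\<psi> i))"
    unfolding x_def using J I(1) by (intro clinear_on_sum_scaleC[OF K lin]) auto
  also have "\<dots> = (\<Sum>i\<in>J. scaleC (u (g i)) (r i) + scaleC (u (g i)) (g i))"
    using rg J by (intro sum.cong) (auto simp: scaleC_add_right)
  also have "\<dots> = (\<Sum>i\<in>J. scaleC (u (g i)) (r i))"
    using sum_g by (simp add: sum.distrib)
  finally have "\<psi> x \<in> R"
    using rg J by (auto intro!: csubspace_sum[OF R] csubspace_scaleC[OF R])
  then have "x = 0" using inj xK by auto
  moreover obtain i0 where "i0 \<in> J" "g i0 = v0" using t(4) tJ by auto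
  ultimately have "u (g i0) = 0"
    using cv.independentD[OF I(3) J(1) J(2), of "\<lambda>i. u (g i)" i0] unfolding x_def by simp
  then show False using \<open>g i0 = v0\<close> t(5) by simp
qed

lemma card_independent_le_card_modulo:
  assumes K: "csubspace K" and lin: "clinear_on K \<psi>" and R: "csubspace R"
    and inj: "\<forall>x\<in>K. \<psi> x \<in> R \<longrightarrow> x = 0" and G: "finite G"
    and img: "\<psi> ` K \<subseteq> setsum R (cspan G)"
    and I: "I \<subseteq> K" "finite I" "cv.independent I"
  shows "card I \<le> card G"
proof -
  have "\<forall>i\<in>I. \<exists>r g. r \<in> R \<and> g \<in> cspan G \<and> \<psi> i = r + g"
    using img I(1) unfolding setsum_def by blast
  then obtain r g where rg: "\<And>i. i \<in> I \<Longrightarrow> r i \<in> R \<and> g i \<in> cspan G \<and> \<psi> i = r i + g i"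
    by metis
  have inj_g: "inj_on g I"
  proof (rule inj_onI)
    fix i j assume ij: "i \<in> I" "j \<in> I" "g i = g j"
    have "\<psi> (i - j) = \<psi> i - \<psi> j"
      using clinear_on_diff[OF lin K] ij I(1) by auto
    also have "\<dots> = r i - r j" using rg ij by simp
    finally have "\<psi> (i - j) = r i - r j" .
    then have "\<psi> (i - j) \<in> R" using csubspace_diff[OF R] rg ij by simp
    moreover have "i - j \<in> K" using csubspace_diff[OF K] ij I(1) by auto
    ultimately have "i - j = 0" using inj by auto
    then show "i = j" by simp
  qed
  moreover have "cv.independent (g ` I)"
    using rg by (intro independent_image_modulo[OF K lin R inj I _ inj_g]) auto
  moreover have "g ` I \<subseteq> cv.span G" using rg by (auto simp: cspan_eq_span)
  ultimately have "card (g ` I) \<le> card G" using cv.independent_span_bound[OF G] by auto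
  then show ?thesis using card_image[OF inj_g] by simp
qed

lemma cdim_le_card_modulo:
  assumes K: "csubspace K" and lin: "clinear_on K \<psi>" and R: "csubspace R"
    and inj: "\<forall>x\<in>K. \<psi> x \<in> R \<longrightarrow> x = 0" and G: "finite G"
    and img: "\<psi> ` K \<subseteq> setsum R (cspan G)"
  shows "cdim K \<le> enat (card G)"
proof -
  obtain B where B: "B \<subseteq> K" "cv.independent B" "K \<subseteq> cv.span B"
    using cv.basis_exists by metis
  have small: "card I \<le> card G" if "I \<subseteq> B" "finite I" for I
    using that B(1) cv.independent_mono[OF B(2) that(1)]
    by (intro card_independent_le_card_modulo[OF K lin R inj G img _ that(2)]) auto
  have "finite B"
  proof (rule ccontr)
    assume "infinite B"
    then obtain I where "I \<subseteq> B" "finite I" "card I = Suc (card G)"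
      using infinite_arbitrarily_large by metis
    then show False using small[of I] by simp
  qed
  then have "cdim K \<le> enat (card B)"
    using cdim_le_card[OF K _ \<open>finite B\<close>] B(3) by (simp add: cspan_eq_span)
  then show ?thesis using small[OF subset_refl \<open>finite B\<close>] by (meson enat_ord_simps(1) order_trans)
qed

section \<open>Invertibility\<close>

lemma kernel_on_lam_minus: "kernel_on X (lam_minus \<mu> T) = kernel_on X (minus_lam T \<mu>)"
  unfolding kernel_on_def lam_minus_def minus_lam_def by (auto simp: algebra_simps)

lemma image_lam_minus:
  assumes X: "csubspace X" and T: "clinear_on X T"
  shows "lam_minus \<mu> T ` X = minus_lam T \<mu> ` X"
proof -
  have "lam_minus \<mu> T x = minus_lam T \<mu> (- x)" "minus_lam T \<mu> x = lam_minus \<mu> T (- x)"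
    if "x \<in> X" for x
    using clinear_on_uminus[OF T that] unfolding lam_minus_def minus_lam_def
    by (auto simp: cv.scale_minus_right)
  then show ?thesis using csubspace_uminus[OF X] by blast
qed

lemma invertible_on_lam_minus_iff:
  assumes "csubspace X" "clinear_on X T"
  shows "left_invertible_on X X (lam_minus \<mu> T) \<longleftrightarrow> left_invertible_on X X (minus_lam T \<mu>)"
    and "right_invertible_on X X (lam_minus \<mu> T) \<longleftrightarrow> right_invertible_on X X (minus_lam T \<mu>)"
    and "invertible_on X X (lam_minus \<mu> T) \<longleftrightarrow> invertible_on X X (minus_lam T \<mu>)"
  unfolding invertible_on_def left_invertible_on_def right_invertible_on_def alpha_op_def
    beta_op_def kernel_on_lam_minus image_lam_minus[OF assms] by auto

lemma invertible_onI:
  assumes X: "closed_csubspace X" and ker: "kernel_on X F = {0}" and img: "F ` X = X"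
  shows "invertible_on X X F"
proof -
  have X0: "0 \<in> X" using X unfolding closed_csubspace_def csubspace_def by auto
  have "alpha_op X F = 0" "beta_op X X F = 0"
    unfolding alpha_op_def beta_op_def ker img using cdim_eq_0_iff codim_in_eq_0_iff[OF X0] by auto
  moreover have "complemented_in (F ` X) X"
    unfolding img complemented_in_def using X0
    by (intro exI[of _ "{0}"]) (auto simp: closed_csubspace_def csubspace_def)
  moreover have "complemented_in (kernel_on X F) X"
    unfolding ker complemented_in_def using X X0 by (intro exI[of _ X]) auto
  moreover have "closed (F ` X)" using X img unfolding closed_csubspace_def by simp
  ultimately show ?thesis
    unfolding invertible_on_def left_invertible_on_def right_invertible_on_def by simp
qed

lemma kernel_on_eq_0_if_left_invertible:
  "left_invertible_on X X F \<Longrightarrow> kernel_on X F = {0}"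
  using cdim_eq_0_iff unfolding left_invertible_on_def alpha_op_def by auto

lemma image_eq_if_right_invertible:
  assumes "right_invertible_on X X F" "csubspace X" "clinear_on X F" "F ` X \<subseteq> X"
  shows "F ` X = X"
proof -
  have "0 \<in> F ` X"
    using clinear_on_0[OF assms(3) csubspace_0[OF assms(2)]] csubspace_0[OF assms(2)] by force
  then show ?thesis
    using assms(1,4) codim_in_eq_0_iff[of "F ` X" X] unfolding right_invertible_on_def beta_op_def by auto
qed

section \<open>Orthogonal direct sums\<close>

lemma cinner_zero_left [simp]: "cinner 0 (x::'a::chilbert_space) = 0"
  using cinner_add_left[of 0 0 x] by simp

lemma cinner_sum_left: "cinner (\<Sum>i\<in>I. f i) (y::'a::chilbert_space) = (\<Sum>i\<in>I. cinner (f i) y)"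
  by (induction I rule: infinite_finite_induct) (auto simp: cinner_add_left)

lemma cinner_sum_right: "cinner (y::'a::chilbert_space) (\<Sum>i\<in>I. f i) = (\<Sum>i\<in>I. cinner y (f i))"
  by (subst (1 2) cinner_commute) (simp add: cinner_sum_left)

locale orthogonal_family =
  fixes n :: nat and X :: "nat \<Rightarrow> 'h::chilbert_space set"
  assumes closed_csubspace_X: "\<And>k. k \<in> {1..n} \<Longrightarrow> closed_csubspace (X k)"
    and orthogonal_X: "\<And>j k x y. j \<in> {1..n} \<Longrightarrow> k \<in> {1..n} \<Longrightarrow> j \<noteq> k \<Longrightarrow>
      x \<in> X j \<Longrightarrow> y \<in> X k \<Longrightarrow> cinner x y = 0"
begin

lemma csubspace_X: "k \<in> {1..n} \<Longrightarrow> csubspace (X k)"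
  and closed_X: "k \<in> {1..n} \<Longrightarrow> closed (X k)"
  using closed_csubspace_X unfolding closed_csubspace_def by auto

definition "direct_sum = orth_dsum n X"

definition "coord i y = components n X y i"

definition component_family :: "(nat \<Rightarrow> 'h) \<Rightarrow> bool" where
  "component_family x \<longleftrightarrow> (\<forall>k\<in>{1..n}. x k \<in> X k) \<and> (\<forall>k. k \<notin> {1..n} \<longrightarrow> x k = 0)"

lemma component_eq_0_if_sum_eq_0:
  assumes "\<forall>k\<in>{1..n}. x k \<in> X k" "(\<Sum>k=1..n. x k) = 0" "j \<in> {1..n}"
  shows "x j = 0"
proof -
  have "0 = cinner (\<Sum>k=1..n. x k) (x j)" using assms(2) by simp
  also have "\<dots> = (\<Sum>k\<in>{1..n}. cinner (x k) (x j))" by (rule cinner_sum_left)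
  also have "\<dots> = cinner (x j) (x j) + (\<Sum>k\<in>{1..n} - {j}. cinner (x k) (x j))"
    using assms(3) by (simp add: sum.remove)
  also have "(\<Sum>k\<in>{1..n} - {j}. cinner (x k) (x j)) = 0"
  proof (rule sum.neutral, rule ballI)
    fix k assume "k \<in> {1..n} - {j}"
    then show "cinner (x k) (x j) = 0" using assms(1,3) by (intro orthogonal_X[of k j]) auto
  qed
  finally show ?thesis using cinner_eq_zero_iff[of "x j"] by simp
qed

lemma components_sum:
  assumes "component_family x"
  shows "components n X (\<Sum>k=1..n. x k) = x"
  unfolding components_def
proof (rule the_equality)
  fix x' assume x': "(\<forall>k\<in>{1..n}. x' k \<in> X k) \<and> (\<forall>k. k \<notin> {1..n} \<longrightarrow> x' k = 0)
    \<and> (\<Sum>k=1..n. x k) = (\<Sum>k=1..n. x' k)"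
  show "x' = x"
  proof
    fix k show "x' k = x k"
    proof (cases "k \<in> {1..n}")
      case True
      have "(\<Sum>k=1..n. x' k - x k) = 0" using x' by (simp add: sum_subtractf)
      then have "x' k - x k = 0"
        using component_eq_0_if_sum_eq_0[of "\<lambda>k. x' k - x k" k] True x' assms csubspace_diff csubspace_X
        unfolding component_family_def by blast
      then show ?thesis by simp
    qed (use x' assms in \<open>auto simp: component_family_def\<close>)
  qed
qed (use assms in \<open>auto simp: component_family_def\<close>)

lemma sum_in_direct_sum: "component_family x \<Longrightarrow> (\<Sum>k=1..n. x k) \<in> direct_sum"
  unfolding direct_sum_def orth_dsum_def component_family_def by auto

lemma coord_sum: "component_family x \<Longrightarrow> coord i (\<Sum>k=1..n. x k) = x i"
  using components_sum unfolding coord_def by simp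

lemma component_family_coord:
  assumes "y \<in> direct_sum"
  shows "component_family (\<lambda>i. coord i y)" and "(\<Sum>k=1..n. coord k y) = y"
proof -
  obtain x where x: "\<forall>k\<in>{1..n}. x k \<in> X k" "y = (\<Sum>k=1..n. x k)"
    using assms unfolding direct_sum_def orth_dsum_def by auto
  define x' where "x' k = (if k \<in> {1..n} then x k else 0)" for k
  have x': "component_family x'" "y = (\<Sum>k=1..n. x' k)"
    using x unfolding component_family_def x'_def by auto
  then have "(\<lambda>i. coord i y) = x'" using coord_sum by auto
  then show "component_family (\<lambda>i. coord i y)" "(\<Sum>k=1..n. coord k y) = y" using x' by metis+
qed

lemma coord_in_X: "y \<in> direct_sum \<Longrightarrow> i \<in> {1..n} \<Longrightarrow> coord i y \<in> X i"
  using component_family_coord unfolding component_family_def by blast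

lemma coord_outside: "y \<in> direct_sum \<Longrightarrow> i \<notin> {1..n} \<Longrightarrow> coord i y = 0"
  using component_family_coord unfolding component_family_def by blast

lemma component_family_add: "component_family x \<Longrightarrow> component_family y \<Longrightarrow> component_family (\<lambda>i. x i + y i)"
  unfolding component_family_def using csubspace_X csubspace_add by fastforce

lemma component_family_scaleC: "component_family x \<Longrightarrow> component_family (\<lambda>i. scaleC c (x i))"
  unfolding component_family_def using csubspace_X csubspace_scaleC by fastforce

lemma component_family_0: "component_family (\<lambda>i. 0)"
  unfolding component_family_def using csubspace_X csubspace_0 by fastforce

lemma sum_coord_add:
  "x \<in> direct_sum \<Longrightarrow> y \<in> direct_sum \<Longrightarrow> (\<Sum>k=1..n. coord k x + coord k y) = x + y"
  using component_family_coord(2)[of x] component_family_coord(2)[of y] by (simp add: sum.distrib)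

lemma sum_coord_scaleC:
  "x \<in> direct_sum \<Longrightarrow> (\<Sum>k=1..n. scaleC c (coord k x)) = scaleC c x"
  using component_family_coord(2)[of x] by (simp add: cv.scale_sum_right[symmetric])

lemma coord_add: assumes "x \<in> direct_sum" "y \<in> direct_sum" shows "coord i (x + y) = coord i x + coord i y"
  using coord_sum[OF component_family_add[OF component_family_coord(1)[OF assms(1)]
      component_family_coord(1)[OF assms(2)]], of i] sum_coord_add[OF assms] by simp

lemma coord_scaleC: assumes "x \<in> direct_sum" shows "coord i (scaleC c x) = scaleC c (coord i x)"
  using coord_sum[OF component_family_scaleC[OF component_family_coord(1)[OF assms]], of i]
    sum_coord_scaleC[OF assms] by simp

lemma coord_0: "coord i 0 = 0"
  using coord_sum[OF component_family_0] by simp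

lemma csubspace_direct_sum: "csubspace direct_sum"
  unfolding csubspace_def
proof (intro conjI ballI allI)
  show "0 \<in> direct_sum" using sum_in_direct_sum[OF component_family_0] by simp
next
  fix x y assume xy: "x \<in> direct_sum" "y \<in> direct_sum"
  show "x + y \<in> direct_sum"
    using sum_in_direct_sum[OF component_family_add[OF component_family_coord(1)[OF xy(1)]
        component_family_coord(1)[OF xy(2)]]] sum_coord_add[OF xy] by simp
next
  fix c x assume x: "x \<in> direct_sum"
  show "scaleC c x \<in> direct_sum"
    using sum_in_direct_sum[OF component_family_scaleC[OF component_family_coord(1)[OF x]]]
      sum_coord_scaleC[OF x] by simp
qed

lemma clinear_on_coord: "clinear_on direct_sum (coord i)"
  unfolding clinear_on_def using coord_add coord_scaleC by auto

lemma coord_uminus: "y \<in> direct_sum \<Longrightarrow> coord i (- y) = - coord i y"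
  using clinear_on_uminus[OF clinear_on_coord] .

lemma in_direct_sum_if_in_X: "k \<in> {1..n} \<Longrightarrow> x \<in> X k \<Longrightarrow> x \<in> direct_sum"
  and coord_of_X: "k \<in> {1..n} \<Longrightarrow> x \<in> X k \<Longrightarrow> coord i x = (if i = k then x else 0)"
proof -
  assume k: "k \<in> {1..n}" "x \<in> X k"
  have family: "component_family (\<lambda>i. if i = k then x else 0)"
    using k csubspace_X unfolding component_family_def by (auto intro: csubspace_0)
  have "(\<Sum>j=1..n. (if j = k then x else 0)) = x" using k(1) by (simp add: sum.delta)
  then show "x \<in> direct_sum" "coord i x = (if i = k then x else 0)"
    using sum_in_direct_sum[OF family] coord_sum[OF family, of i] by auto
qed

lemma norm_coord_le: assumes y: "y \<in> direct_sum" shows "norm (coord i y) \<le> norm y"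
proof (cases "i \<in> {1..n}")
  case False
  then show ?thesis using coord_outside[OF y False] by simp
next
  case True
  have diagonal: "cinner (coord k y) y = cinner (coord k y) (coord k y)" if k: "k \<in> {1..n}" for k
  proof -
    have "cinner (coord k y) y = (\<Sum>j\<in>{1..n}. cinner (coord k y) (coord j y))"
      using cinner_sum_right[of "coord k y" "\<lambda>j. coord j y" "{1..n}"] component_family_coord(2)[OF y]
      by simp
    also have "\<dots> = cinner (coord k y) (coord k y) + (\<Sum>j\<in>{1..n} - {k}. cinner (coord k y) (coord j y))"
      using k by (simp add: sum.remove)
    also have "(\<Sum>j\<in>{1..n} - {k}. cinner (coord k y) (coord j y)) = 0"
    proof (rule sum.neutral, rule ballI)
      fix j assume "j \<in> {1..n} - {k}"
      then show "cinner (coord k y) (coord j y) = 0"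
        using k coord_in_X[OF y] by (intro orthogonal_X[of k j]) auto
    qed
    finally show ?thesis by simp
  qed
  have "cinner y y = (\<Sum>k\<in>{1..n}. cinner (coord k y) y)"
    using cinner_sum_left[of "\<lambda>j. coord j y" "{1..n}" y] component_family_coord(2)[OF y] by simp
  also have "\<dots> = (\<Sum>k\<in>{1..n}. cinner (coord k y) (coord k y))" using diagonal by simp
  finally have "Re (cinner y y) = (\<Sum>k\<in>{1..n}. Re (cinner (coord k y) (coord k y)))" by simp
  moreover have "Re (cinner (coord i y) (coord i y)) \<le> (\<Sum>k\<in>{1..n}. Re (cinner (coord k y) (coord k y)))"
    using True by (intro member_le_sum) (auto intro: cinner_self_nonneg)
  ultimately show ?thesis by (simp add: norm_eq_sqrt_cinner)
qed

lemma Cauchy_coord: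
  assumes "\<forall>m. f m \<in> direct_sum" "Cauchy f"
  shows "Cauchy (\<lambda>m. coord i (f m))"
proof (rule CauchyI)
  fix e :: real assume "e > 0"
  then obtain N where N: "\<forall>m\<ge>N. \<forall>p\<ge>N. norm (f m - f p) < e"
    using assms(2) unfolding Cauchy_def dist_norm by blast
  have "norm (coord i (f m) - coord i (f p)) \<le> norm (f m - f p)" for m p
    using clinear_on_diff[OF clinear_on_coord csubspace_direct_sum] csubspace_diff[OF csubspace_direct_sum]
      norm_coord_le assms(1) by metis
  then show "\<exists>N. \<forall>m\<ge>N. \<forall>p\<ge>N. norm (coord i (f m) - coord i (f p)) < e"
    using N by (meson le_less_trans)
qed

lemma closed_direct_sum: "closed direct_sum"
  unfolding closed_sequential_limits
proof (intro allI impI, elim conjE)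
  fix f l assume f: "\<forall>m. f m \<in> direct_sum" and fl: "f \<longlonglongrightarrow> l"
  define z where "z i = (if i \<in> {1..n} then lim (\<lambda>m. coord i (f m)) else 0)" for i
  have z_lim: "(\<lambda>m. coord i (f m)) \<longlonglongrightarrow> z i" if "i \<in> {1..n}" for i
    using Cauchy_convergent[OF Cauchy_coord[OF f LIMSEQ_imp_Cauchy[OF fl]]] that
    unfolding z_def by (simp add: convergent_LIMSEQ_iff)
  have z: "component_family z"
    unfolding component_family_def
  proof (intro conjI ballI allI impI)
    fix k assume k: "k \<in> {1..n}"
    show "z k \<in> X k" using closed_sequentially[OF closed_X[OF k] _ z_lim[OF k]] coord_in_X f k by auto
  qed (auto simp: z_def)
  have "(\<lambda>m. \<Sum>i=1..n. coord i (f m)) \<longlonglongrightarrow> (\<Sum>i=1..n. z i)"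
    by (rule tendsto_sum) (use z_lim in auto)
  then have "f \<longlonglongrightarrow> (\<Sum>i=1..n. z i)" using component_family_coord(2) f by simp
  then have "l = (\<Sum>i=1..n. z i)" using fl LIMSEQ_unique by blast
  then show "l \<in> direct_sum" using sum_in_direct_sum[OF z] by simp
qed

end

section \<open>Upper triangular operator matrices\<close>

locale triangular_operator = orthogonal_family n X
  for n :: nat and X :: "nat \<Rightarrow> 'h::chilbert_space set" +
  fixes D :: "nat \<Rightarrow> 'h \<Rightarrow> 'h" and A :: "nat \<Rightarrow> nat \<Rightarrow> 'h \<Rightarrow> 'h" and \<mu> :: complex
  assumes bounded_D: "\<And>k. k \<in> {1..n} \<Longrightarrow> bounded_clinear_on (X k) (X k) (D k)"
    and bounded_A: "\<And>i j. 1 \<le> i \<Longrightarrow> i < j \<Longrightarrow> j \<le> n \<Longrightarrow> bounded_clinear_on (X j) (X i) (A i j)"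
begin

definition "E k = minus_lam (D k) \<mu>"

definition "S = lam_minus \<mu> (Tnd n X D A)"

text \<open>\<open>op_row i y\<close> is the \<open>i\<close>-th coordinate of \<open>(T - \<mu>) y\<close>. On vectors supported in the
  first \<open>b\<close> coordinates, \<open>leading_rows b\<close> acts as the upper left \<open>b \<times> b\<close> corner of \<open>T - \<mu>\<close>.\<close>
definition "op_row i y = E i (coord i y) + (\<Sum>j\<in>{i<..n}. A i j (coord j y))"

definition "leading_rows b y = (\<Sum>i=1..b. op_row i y)"

lemma clinear_on_D: "k \<in> {1..n} \<Longrightarrow> clinear_on (X k) (D k)"
  using bounded_D unfolding bounded_clinear_on_def clinear_on_def by blast

lemma E_in_X: "k \<in> {1..n} \<Longrightarrow> x \<in> X k \<Longrightarrow> E k x \<in> X k"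
  using bounded_D[of k] csubspace_diff[OF csubspace_X, of k] csubspace_scaleC[OF csubspace_X, of k]
  unfolding E_def minus_lam_def bounded_clinear_on_def by blast

lemma clinear_on_E: "k \<in> {1..n} \<Longrightarrow> clinear_on (X k) (E k)"
  using clinear_on_D[of k] unfolding E_def minus_lam_def clinear_on_def
  by (auto simp: scaleC_add_right algebra_simps cv.scale_right_diff_distrib scaleC_scaleC mult.commute)

lemma E_0: "k \<in> {1..n} \<Longrightarrow> E k 0 = 0"
  using clinear_on_0[OF clinear_on_E csubspace_0[OF csubspace_X]] .

lemma csubspace_kernel_E: "k \<in> {1..n} \<Longrightarrow> csubspace (kernel_on (X k) (E k))"
  unfolding csubspace_def kernel_on_def
  using csubspace_0[OF csubspace_X] csubspace_add[OF csubspace_X] csubspace_scaleC[OF csubspace_X] E_0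
    clinear_on_add[OF clinear_on_E] clinear_on_scaleC[OF clinear_on_E]
  by (auto simp: cv.scale_eq_0_iff)

lemma invertible_D_iff:
  assumes "k \<in> {1..n}"
  shows "left_invertible_on (X k) (X k) (lam_minus \<mu> (D k)) \<longleftrightarrow> left_invertible_on (X k) (X k) (E k)"
    and "right_invertible_on (X k) (X k) (lam_minus \<mu> (D k)) \<longleftrightarrow> right_invertible_on (X k) (X k) (E k)"
    and "invertible_on (X k) (X k) (lam_minus \<mu> (D k)) \<longleftrightarrow> invertible_on (X k) (X k) (E k)"
  using invertible_on_lam_minus_iff[OF csubspace_X[OF assms] clinear_on_D[OF assms]]
  unfolding E_def by auto

lemma A_in_X: "1 \<le> i \<Longrightarrow> i < j \<Longrightarrow> j \<le> n \<Longrightarrow> x \<in> X j \<Longrightarrow> A i j x \<in> X i"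
  using bounded_A unfolding bounded_clinear_on_def by blast

lemma clinear_on_A: "1 \<le> i \<Longrightarrow> i < j \<Longrightarrow> j \<le> n \<Longrightarrow> clinear_on (X j) (A i j)"
  using bounded_A unfolding bounded_clinear_on_def clinear_on_def by blast

lemma A_0: "1 \<le> i \<Longrightarrow> i < j \<Longrightarrow> j \<le> n \<Longrightarrow> A i j 0 = 0"
  using clinear_on_0[OF clinear_on_A csubspace_0[OF csubspace_X, of j]] by auto

lemma op_row_in_X: "y \<in> direct_sum \<Longrightarrow> i \<in> {1..n} \<Longrightarrow> op_row i y \<in> X i"
  unfolding op_row_def
  by (intro csubspace_add[OF csubspace_X] E_in_X coord_in_X csubspace_sum[OF csubspace_X] A_in_X) auto

lemma op_row_add:
  assumes i: "i \<in> {1..n}" and xy: "x \<in> direct_sum" "y \<in> direct_sum"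
  shows "op_row i (x + y) = op_row i x + op_row i y"
proof -
  have "A i j (coord j (x + y)) = A i j (coord j x) + A i j (coord j y)" if j: "j \<in> {i<..n}" for j
    using coord_add[OF xy] clinear_on_add[OF clinear_on_A] coord_in_X[OF xy(1)] coord_in_X[OF xy(2)] i j
    by simp
  moreover have "E i (coord i (x + y)) = E i (coord i x) + E i (coord i y)"
    using coord_add[OF xy] clinear_on_add[OF clinear_on_E[OF i]] coord_in_X[OF xy(1) i]
      coord_in_X[OF xy(2) i] by simp
  ultimately show ?thesis unfolding op_row_def by (simp add: sum.distrib algebra_simps)
qed

lemma op_row_scaleC:
  assumes i: "i \<in> {1..n}" and x: "x \<in> direct_sum"
  shows "op_row i (scaleC c x) = scaleC c (op_row i x)"
proof -
  have "A i j (coord j (scaleC c x)) = scaleC c (A i j (coord j x))" if j: "j \<in> {i<..n}" for j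
    using coord_scaleC[OF x] clinear_on_scaleC[OF clinear_on_A] coord_in_X[OF x] i j by simp
  moreover have "E i (coord i (scaleC c x)) = scaleC c (E i (coord i x))"
    using coord_scaleC[OF x] clinear_on_scaleC[OF clinear_on_E[OF i]] coord_in_X[OF x i] by simp
  ultimately show ?thesis unfolding op_row_def by (simp add: cv.scale_sum_right scaleC_add_right)
qed

lemma clinear_on_op_row: "i \<in> {1..n} \<Longrightarrow> clinear_on direct_sum (op_row i)"
  unfolding clinear_on_def using op_row_add op_row_scaleC by auto

lemma op_row_cong: "(\<And>j. i \<le> j \<Longrightarrow> coord j y = coord j z) \<Longrightarrow> op_row i y = op_row i z"
  unfolding op_row_def by (intro arg_cong2[where f="(+)"] sum.cong) auto

lemma op_row_eq_0: "i \<in> {1..n} \<Longrightarrow> (\<And>j. i \<le> j \<Longrightarrow> coord j y = 0) \<Longrightarrow> op_row i y = 0"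
  using op_row_cong[of i y 0] clinear_on_0[OF clinear_on_op_row csubspace_0[OF csubspace_direct_sum]] coord_0
  by metis

lemma op_row_of_X:
  assumes k: "k \<in> {1..n}" and x: "x \<in> X k" and i: "i \<in> {1..n}"
  shows "op_row i x = (if i < k then A i k x else if i = k then E k x else 0)"
proof -
  have "(\<Sum>j\<in>{i<..n}. A i j (coord j x)) = (\<Sum>j\<in>{i<..n}. if j = k then A i k x else 0)"
    using coord_of_X[OF k x] A_0 i by (intro sum.cong) auto
  also have "\<dots> = (if i < k then A i k x else 0)" using k by (simp add: sum.delta)
  finally show ?thesis unfolding op_row_def using coord_of_X[OF k x] E_0[OF i] by auto
qed

lemma leading_rows_eq_sum:
  "b \<le> n \<Longrightarrow> leading_rows b y = (\<Sum>k=1..n. if k \<in> {1..b} then op_row k y else 0)"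
  unfolding leading_rows_def by (rule sum.mono_neutral_cong_left) auto

lemma component_family_rows:
  "b \<le> n \<Longrightarrow> y \<in> direct_sum \<Longrightarrow> component_family (\<lambda>i. if i \<in> {1..b} then op_row i y else 0)"
  unfolding component_family_def using op_row_in_X csubspace_X by (auto intro: csubspace_0)

lemma leading_rows_in_direct_sum: "b \<le> n \<Longrightarrow> y \<in> direct_sum \<Longrightarrow> leading_rows b y \<in> direct_sum"
  using leading_rows_eq_sum sum_in_direct_sum[OF component_family_rows] by simp

lemma coord_leading_rows:
  "b \<le> n \<Longrightarrow> y \<in> direct_sum \<Longrightarrow> coord i (leading_rows b y) = (if i \<in> {1..b} then op_row i y else 0)"
  using leading_rows_eq_sum coord_sum[OF component_family_rows] by simp

lemma clinear_on_leading_rows: "b \<le> n \<Longrightarrow> clinear_on direct_sum (leading_rows b)"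
  unfolding clinear_on_def leading_rows_def
  by (auto simp: op_row_add op_row_scaleC sum.distrib cv.scale_sum_right intro!: sum.cong)

lemma S_eq: "y \<in> direct_sum \<Longrightarrow> S y = - leading_rows n y"
proof -
  assume y: "y \<in> direct_sum"
  have "Tnd n X D A y = (\<Sum>i=1..n. D i (coord i y) + (\<Sum>j\<in>{i<..n}. A i j (coord j y)))"
    unfolding Tnd_def coord_def Let_def by simp
  moreover have "scaleC \<mu> y = (\<Sum>i=1..n. scaleC \<mu> (coord i y))"
    using cv.scale_sum_right[of \<mu> "\<lambda>i. coord i y" "{1..n}"] component_family_coord(2)[OF y] by simp
  ultimately have "S y = (\<Sum>i=1..n. scaleC \<mu> (coord i y))
      - (\<Sum>i=1..n. D i (coord i y) + (\<Sum>j\<in>{i<..n}. A i j (coord j y)))"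
    unfolding S_def lam_minus_def by simp
  also have "\<dots> = - leading_rows n y"
    unfolding leading_rows_def op_row_def E_def minus_lam_def
    by (simp add: sum_subtractf[symmetric] sum_negf[symmetric] algebra_simps)
  finally show ?thesis .
qed

lemma S_in_direct_sum: "y \<in> direct_sum \<Longrightarrow> S y \<in> direct_sum"
  using S_eq leading_rows_in_direct_sum[OF le_refl] csubspace_uminus[OF csubspace_direct_sum] by simp

lemma clinear_on_S: "clinear_on direct_sum S"
  unfolding clinear_on_def
  using S_eq clinear_on_add[OF clinear_on_leading_rows[OF le_refl]]
    clinear_on_scaleC[OF clinear_on_leading_rows[OF le_refl]]
    csubspace_add[OF csubspace_direct_sum] csubspace_scaleC[OF csubspace_direct_sum]
  by (auto simp: cv.scale_minus_right)

text \<open>The kernel of the diagonal block of \<open>T - \<mu>\<close> in rows and columns \<open>a+1, \<dots>, b\<close>.\<close>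
definition "block_kernel a b = {y\<in>direct_sum.
  (\<forall>i. i \<notin> {a<..b} \<longrightarrow> coord i y = 0) \<and> (\<forall>i\<in>{a<..b}. op_row i y = 0)}"

lemma csubspace_block_kernel: assumes "b \<le> n" shows "csubspace (block_kernel a b)"
  unfolding csubspace_def
proof (intro conjI ballI allI)
  show "0 \<in> block_kernel a b"
    unfolding block_kernel_def using csubspace_0[OF csubspace_direct_sum] coord_0 op_row_eq_0 assms
    by auto
next
  fix x y assume "x \<in> block_kernel a b" "y \<in> block_kernel a b"
  then show "x + y \<in> block_kernel a b"
    unfolding block_kernel_def using csubspace_add[OF csubspace_direct_sum] coord_add op_row_add assms
    by (auto simp: Suc_le_eq)
next
  fix c x assume "x \<in> block_kernel a b"
  then show "scaleC c x \<in> block_kernel a b"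
    unfolding block_kernel_def using csubspace_scaleC[OF csubspace_direct_sum] coord_scaleC op_row_scaleC assms
    by (auto simp: Suc_le_eq)
qed

lemma block_kernel_empty: assumes "b \<le> a" "b \<le> n" shows "block_kernel a b = {0}"
proof -
  have "y = 0" if y: "y \<in> block_kernel a b" for y
  proof -
    have "\<forall>i. coord i y = 0" using y assms unfolding block_kernel_def by auto
    then show ?thesis using component_family_coord(2)[of y] y unfolding block_kernel_def by simp
  qed
  then show ?thesis using csubspace_0[OF csubspace_block_kernel[OF assms(2)]] by auto
qed

lemma coord_block_kernel_in_kernel_E:
  assumes "a \<le> b" "Suc b \<le> n" and y: "y \<in> block_kernel a (Suc b)"
  shows "coord (Suc b) y \<in> kernel_on (X (Suc b)) (E (Suc b))"
proof -
  have "(\<Sum>j\<in>{Suc b<..n}. A (Suc b) j (coord j y)) = 0"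
    using y A_0 unfolding block_kernel_def by (intro sum.neutral) auto
  moreover have "op_row (Suc b) y = 0" using y assms(1) unfolding block_kernel_def by auto
  ultimately have "E (Suc b) (coord (Suc b) y) = 0" unfolding op_row_def by simp
  then show ?thesis
    unfolding kernel_on_def using y assms(2) coord_in_X unfolding block_kernel_def by auto
qed

lemma block_kernel_Suc_coord_eq_0:
  assumes "a \<le> b" "Suc b \<le> n"
  shows "{y \<in> block_kernel a (Suc b). coord (Suc b) y = 0} = block_kernel a b"
proof
  show "{y \<in> block_kernel a (Suc b). coord (Suc b) y = 0} \<subseteq> block_kernel a b"
  proof
    fix y assume y: "y \<in> {y \<in> block_kernel a (Suc b). coord (Suc b) y = 0}"
    have "coord i y = 0" if "i \<notin> {a<..b}" for i
      using y that unfolding block_kernel_def by (cases "i = Suc b") auto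
    then show "y \<in> block_kernel a b" using y unfolding block_kernel_def by auto
  qed
next
  show "block_kernel a b \<subseteq> {y \<in> block_kernel a (Suc b). coord (Suc b) y = 0}"
  proof
    fix y assume y: "y \<in> block_kernel a b"
    have "op_row (Suc b) y = 0"
      using y assms(2) unfolding block_kernel_def by (intro op_row_eq_0) auto
    then have "op_row i y = 0" if "i \<in> {a<..Suc b}" for i
      using that y unfolding block_kernel_def by (cases "i = Suc b") auto
    then show "y \<in> {y \<in> block_kernel a (Suc b). coord (Suc b) y = 0}"
      using y unfolding block_kernel_def by (auto simp: less_Suc_eq)
  qed
qed

lemma cdim_block_kernel_le:
  "b \<le> n \<Longrightarrow> cdim (block_kernel a b) \<le> (\<Sum>s\<in>{a<..b}. alpha_op (X s) (E s))"
proof (induction b)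
  case (Suc b)
  show ?case
  proof (cases "Suc b \<le> a")
    case False
    then have ab: "a \<le> b" by simp
    have lin: "clinear_on (block_kernel a (Suc b)) (coord (Suc b))"
      by (rule clinear_on_subset[OF clinear_on_coord]) (auto simp: block_kernel_def)
    have img: "coord (Suc b) ` block_kernel a (Suc b) \<subseteq> kernel_on (X (Suc b)) (E (Suc b))"
      using coord_block_kernel_in_kernel_E[OF ab Suc.prems] by auto
    have "cdim (block_kernel a (Suc b))
        \<le> cdim (kernel_on (X (Suc b)) (E (Suc b))) + cdim (block_kernel a b)"
      using cdim_le_add_cdim_kernel[OF csubspace_block_kernel[OF Suc.prems] lin img]
        csubspace_kernel_E[of "Suc b"] block_kernel_Suc_coord_eq_0[OF ab Suc.prems] Suc.prems
      by simp
    also have "\<dots> \<le> alpha_op (X (Suc b)) (E (Suc b)) + (\<Sum>s\<in>{a<..b}. alpha_op (X s) (E s))"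
      using Suc unfolding alpha_op_def by (intro add_left_mono) auto
    also have "\<dots> = (\<Sum>s\<in>{a<..Suc b}. alpha_op (X s) (E s))"
    proof -
      have "{a<..Suc b} = insert (Suc b) {a<..b}" using ab by auto
      then show ?thesis by simp
    qed
    finally show ?thesis .
  qed (use block_kernel_empty[of "Suc b" a] Suc.prems cdim_eq_0_iff[of "{0::'h}"] in simp)
qed (use block_kernel_empty[of 0 a] cdim_eq_0_iff[of "{0::'h}"] in simp)

definition "leading_space b = {y\<in>direct_sum. \<forall>i. b < i \<longrightarrow> coord i y = 0}"

lemma csubspace_leading_space: "csubspace (leading_space b)"
  unfolding csubspace_def leading_space_def
  using csubspace_0[OF csubspace_direct_sum] csubspace_add[OF csubspace_direct_sum]
    csubspace_scaleC[OF csubspace_direct_sum] coord_0 coord_add coord_scaleC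
  by auto

lemma leading_space_mono: "leading_space b \<subseteq> leading_space (Suc b)"
  unfolding leading_space_def by auto

lemma leading_space_0: "leading_space 0 = {0}"
proof -
  have "y = 0" if y: "y \<in> leading_space 0" for y
  proof -
    have "coord i y = 0" for i
      using y coord_outside[of y i] unfolding leading_space_def by (cases "i = 0") auto
    then show ?thesis using component_family_coord(2)[of y] y unfolding leading_space_def by simp
  qed
  then show ?thesis using csubspace_0[OF csubspace_leading_space] by auto
qed

lemma leading_space_n: "leading_space n = direct_sum"
  unfolding leading_space_def using coord_outside by auto

lemma in_leading_space_if_in_X: "k \<in> {1..n} \<Longrightarrow> k \<le> b \<Longrightarrow> x \<in> X k \<Longrightarrow> x \<in> leading_space b"
  unfolding leading_space_def using in_direct_sum_if_in_X coord_of_X by auto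

lemma leading_rows_in_leading_space:
  "b \<le> n \<Longrightarrow> y \<in> direct_sum \<Longrightarrow> leading_rows b y \<in> leading_space b"
  unfolding leading_space_def using leading_rows_in_direct_sum coord_leading_rows by auto

lemma leading_rows_Suc: "leading_rows (Suc b) y = leading_rows b y + op_row (Suc b) y"
  unfolding leading_rows_def by simp

lemma diff_in_leading_space:
  assumes b: "Suc b \<le> n" and z: "z \<in> leading_space (Suc b)" and w: "w \<in> X (Suc b)"
    and g: "g \<in> X (Suc b)" "coord (Suc b) z = E (Suc b) w + g"
  shows "z - leading_rows (Suc b) w - g \<in> leading_space b"
proof -
  have sb: "Suc b \<in> {1..n}" using b by simp
  have zM: "z \<in> direct_sum" using z unfolding leading_space_def by auto
  have wM: "w \<in> direct_sum" using in_direct_sum_if_in_X[OF sb w] .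
  have gM: "g \<in> direct_sum" using in_direct_sum_if_in_X[OF sb g(1)] .
  have UwM: "leading_rows (Suc b) w \<in> direct_sum" using leading_rows_in_direct_sum[OF b wM] .
  have M: "z - leading_rows (Suc b) w - g \<in> direct_sum"
    using zM UwM gM csubspace_diff[OF csubspace_direct_sum] by auto
  have coord_diff: "coord i (z - leading_rows (Suc b) w - g)
      = coord i z - coord i (leading_rows (Suc b) w) - coord i g" for i
    using clinear_on_diff[OF clinear_on_coord csubspace_direct_sum] zM UwM gM
      csubspace_diff[OF csubspace_direct_sum] by simp
  have "coord i (z - leading_rows (Suc b) w - g) = 0" if "b < i" for i
  proof (cases "i = Suc b")
    case True
    then show ?thesis
      using coord_diff coord_leading_rows[OF b wM] op_row_of_X[OF sb w sb] g(2) coord_of_X[OF sb g(1)]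
      by simp
  next
    case False
    then show ?thesis
      using that coord_diff coord_leading_rows[OF b wM] z coord_of_X[OF sb g(1)]
      unfolding leading_space_def by simp
  qed
  then show ?thesis using M unfolding leading_space_def by auto
qed

lemma setsum_leading_rows_Suc_eq:
  assumes b: "Suc b \<le> n"
    and G1: "G1 \<subseteq> leading_space b" "setsum (leading_rows b ` leading_space b) (cspan G1) = leading_space b"
    and G2: "G2 \<subseteq> X (Suc b)" "setsum (E (Suc b) ` X (Suc b)) (cspan G2) = X (Suc b)"
  shows "setsum (leading_rows (Suc b) ` leading_space (Suc b)) (cspan (G1 \<union> G2)) = leading_space (Suc b)"
proof -
  have sb: "Suc b \<in> {1..n}" using b by simp
  have "G1 \<union> G2 \<subseteq> leading_space (Suc b)"
    using G1(1) leading_space_mono G2(1) in_leading_space_if_in_X[OF sb] by auto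
  then have "cspan (G1 \<union> G2) \<subseteq> leading_space (Suc b)"
    by (rule cspan_subset_csubspace[OF csubspace_leading_space])
  moreover have "leading_rows (Suc b) ` leading_space (Suc b) \<subseteq> leading_space (Suc b)"
    using leading_rows_in_leading_space[OF b] unfolding leading_space_def by auto
  ultimately have "setsum (leading_rows (Suc b) ` leading_space (Suc b)) (cspan (G1 \<union> G2))
      \<subseteq> leading_space (Suc b)"
    using csubspace_add[OF csubspace_leading_space] unfolding setsum_def by blast
  moreover have "leading_space (Suc b) \<subseteq> setsum (leading_rows (Suc b) ` leading_space (Suc b)) (cspan (G1 \<union> G2))"
  proof
    fix z assume z: "z \<in> leading_space (Suc b)"
    have "coord (Suc b) z \<in> X (Suc b)" using z coord_in_X[OF _ sb] unfolding leading_space_def by auto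
    then obtain w g2 where wg: "w \<in> X (Suc b)" "g2 \<in> cspan G2" "coord (Suc b) z = E (Suc b) w + g2"
      using G2(2) unfolding setsum_def by blast
    have g2X: "g2 \<in> X (Suc b)" using cspan_subset_csubspace[OF csubspace_X[OF sb] G2(1)] wg(2) by auto
    obtain x g1 where xg: "x \<in> leading_space b" "g1 \<in> cspan G1"
        "z - leading_rows (Suc b) w - g2 = leading_rows b x + g1"
      using diff_in_leading_space[OF b z wg(1) g2X wg(3)] G1(2) unfolding setsum_def by blast
    have xM: "x \<in> direct_sum" and wM: "w \<in> direct_sum"
      using xg(1) in_direct_sum_if_in_X[OF sb wg(1)] unfolding leading_space_def by auto
    have "op_row (Suc b) x = 0" using xg(1) sb unfolding leading_space_def by (intro op_row_eq_0) auto
    then have "z = leading_rows (Suc b) (x + w) + (g1 + g2)"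
      using xg(3) leading_rows_Suc[of b x] clinear_on_add[OF clinear_on_leading_rows[OF b] xM wM]
      by (simp add: algebra_simps)
    moreover have "x + w \<in> leading_space (Suc b)"
      using csubspace_add[OF csubspace_leading_space] xg(1) leading_space_mono
        in_leading_space_if_in_X[OF sb _ wg(1)] by blast
    moreover have "g1 + g2 \<in> cspan (G1 \<union> G2)"
      using xg(2) wg(2) cv.span_mono[of G1 "G1 \<union> G2"] cv.span_mono[of G2 "G1 \<union> G2"]
      by (auto simp: cspan_eq_span intro!: cv.span_add)
    ultimately show "z \<in> setsum (leading_rows (Suc b) ` leading_space (Suc b)) (cspan (G1 \<union> G2))"
      unfolding setsum_def by blast
  qed
  ultimately show ?thesis by blast
qed

lemma codim_leading_rows_le:
  "b \<le> n \<Longrightarrow> codim_in (leading_rows b ` leading_space b) (leading_space b)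
      \<le> (\<Sum>s=1..b. beta_op (X s) (X s) (E s))"
proof (induction b)
  case 0
  have "leading_rows 0 ` leading_space 0 = {0}" using leading_space_0 unfolding leading_rows_def by simp
  then show ?case using leading_space_0 codim_in_eq_0_iff[of "{0::'h}" "{0}"] by simp
next
  case (Suc b)
  have sb: "Suc b \<in> {1..n}" and b: "b \<le> n" using Suc.prems by auto
  show ?case
  proof (cases "(\<Sum>s=1..b. beta_op (X s) (X s) (E s))")
    case (enat t)
    show ?thesis
    proof (cases "beta_op (X (Suc b)) (X (Suc b)) (E (Suc b))")
      case (enat c2)
      obtain c1 where c1: "codim_in (leading_rows b ` leading_space b) (leading_space b) = enat c1" "c1 \<le> t"
        using Suc.IH[OF b] \<open>_ = enat t\<close> by (cases "codim_in (leading_rows b ` leading_space b) (leading_space b)") auto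
      obtain G1 where G1: "finite G1" "G1 \<subseteq> leading_space b" "card G1 = c1"
          "setsum (leading_rows b ` leading_space b) (cspan G1) = leading_space b"
        using codim_in_enatE[OF c1(1)] by metis
      obtain G2 where G2: "finite G2" "G2 \<subseteq> X (Suc b)" "card G2 = c2"
          "setsum (E (Suc b) ` X (Suc b)) (cspan G2) = X (Suc b)"
        using codim_in_enatE[OF enat[unfolded beta_op_def]] by metis
      have G: "G1 \<union> G2 \<subseteq> leading_space (Suc b)"
        using G1(2) leading_space_mono G2(2) in_leading_space_if_in_X[OF sb] by auto
      have "setsum (leading_rows (Suc b) ` leading_space (Suc b)) (cspan (G1 \<union> G2))
          = leading_space (Suc b)"
        by (rule setsum_leading_rows_Suc_eq[OF Suc.prems G1(2,4) G2(2,4)])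
      then have "codim_in (leading_rows (Suc b) ` leading_space (Suc b)) (leading_space (Suc b))
          \<le> enat (card (G1 \<union> G2))"
        using G1(1) G2(1) G by (intro codim_in_le_card) auto
      also have "\<dots> \<le> enat (t + c2)" using card_Un_le[of G1 G2] G1(3) G2(3) c1(2) by simp
      finally show ?thesis using \<open>_ = enat t\<close> enat by simp
    qed simp
  qed simp
qed

text \<open>If \<open>S\<close> is onto, solving \<open>S u = y\<close> for \<open>y \<in> X k\<close> and keeping the coordinates of \<open>u\<close>
  beyond \<open>k\<close> gives an element of \<open>block_kernel k n\<close>.\<close>
lemma X_eq_E_plus_coupling_if_surjective:
  assumes surj: "S ` direct_sum = direct_sum" and k: "k \<in> {1..n}" and y: "y \<in> X k"
  obtains w v where "w \<in> X k" "v \<in> block_kernel k n"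
    "y = E k w - (\<Sum>j\<in>{k<..n}. A k j (coord j v))"
proof -
  obtain u where u: "u \<in> direct_sum" "y = S u"
    using surj in_direct_sum_if_in_X[OF k y] by blast
  have row_u: "op_row i u = - coord i y" if "i \<in> {1..n}" for i
  proof -
    have "coord i y = coord i (- leading_rows n u)" using u S_eq by simp
    also have "\<dots> = - op_row i u"
      using coord_uminus[OF leading_rows_in_direct_sum[OF le_refl u(1)]]
        coord_leading_rows[OF le_refl u(1)] that by simp
    finally show ?thesis by simp
  qed
  define x where "x j = (if j \<in> {k<..n} then coord j u else 0)" for j
  have x: "component_family x"
    unfolding component_family_def x_def using coord_in_X[OF u(1)] csubspace_X
    by (auto intro: csubspace_0)
  define v where "v = (\<Sum>j=1..n. x j)"
  have coord_v: "coord j v = x j" for j unfolding v_def by (rule coord_sum[OF x])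
  have "v \<in> block_kernel k n"
    unfolding block_kernel_def
  proof (intro CollectI conjI allI impI ballI)
    show "v \<in> direct_sum" unfolding v_def by (rule sum_in_direct_sum[OF x])
  next
    fix i assume "i \<notin> {k<..n}" then show "coord i v = 0" using coord_v x_def by auto
  next
    fix i assume i: "i \<in> {k<..n}"
    have "op_row i v = op_row i u"
      using coord_v x_def i coord_outside[OF u(1)] by (intro op_row_cong) auto
    also have "\<dots> = 0" using row_u[of i] i coord_of_X[OF k y, of i] by simp
    finally show "op_row i v = 0" .
  qed
  moreover have "- coord k u \<in> X k" using csubspace_uminus[OF csubspace_X[OF k] coord_in_X[OF u(1) k]] .
  moreover have "y = E k (- coord k u) - (\<Sum>j\<in>{k<..n}. A k j (coord j v))"
  proof -
    have "y = - op_row k u" using row_u[OF k] coord_of_X[OF k y, of k] by simp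
    moreover have "E k (- coord k u) = - E k (coord k u)"
      using clinear_on_uminus[OF clinear_on_E[OF k] coord_in_X[OF u(1) k]] .
    ultimately show ?thesis using coord_v unfolding op_row_def x_def by simp
  qed
  ultimately show ?thesis using that by blast
qed

lemma beta_E_le_if_surjective:
  assumes surj: "S ` direct_sum = direct_sum" and k: "k \<in> {1..n}"
  shows "beta_op (X k) (X k) (E k) \<le> (\<Sum>s\<in>{k<..n}. alpha_op (X s) (E s))"
proof (cases "cdim (block_kernel k n)")
  case (enat m)
  obtain F where F: "finite F" "F \<subseteq> block_kernel k n" "card F = m" "cspan F = block_kernel k n"
    using cdim_enatE[OF enat] by metis
  have FM: "F \<subseteq> direct_sum" using F(2) unfolding block_kernel_def by auto
  define \<phi> where "\<phi> v = - (\<Sum>j\<in>{k<..n}. A k j (coord j v))" for v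
  have \<phi>_eq: "\<phi> v = E k (coord k v) - op_row k v" for v
    unfolding \<phi>_def op_row_def by simp
  have lin: "clinear_on direct_sum \<phi>"
    unfolding clinear_on_def \<phi>_eq
    using coord_add coord_scaleC op_row_add[OF k] op_row_scaleC[OF k] clinear_on_add[OF clinear_on_E[OF k]]
      clinear_on_scaleC[OF clinear_on_E[OF k]] coord_in_X[OF _ k]
    by (auto simp: algebra_simps cv.scale_right_diff_distrib)
  have \<phi>X: "\<phi> ` F \<subseteq> X k"
    unfolding \<phi>_eq using FM E_in_X[OF k] coord_in_X[OF _ k] op_row_in_X[OF _ k]
      csubspace_diff[OF csubspace_X[OF k]] by blast
  have "setsum (E k ` X k) (cspan (\<phi> ` F)) = X k"
  proof
    show "setsum (E k ` X k) (cspan (\<phi> ` F)) \<subseteq> X k"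
      unfolding setsum_def using cspan_subset_csubspace[OF csubspace_X[OF k] \<phi>X] E_in_X[OF k]
        csubspace_add[OF csubspace_X[OF k]] by blast
  next
    show "X k \<subseteq> setsum (E k ` X k) (cspan (\<phi> ` F))"
    proof
      fix y assume "y \<in> X k"
      then obtain w v where "w \<in> X k" "v \<in> block_kernel k n" "y = E k w + \<phi> v"
        using X_eq_E_plus_coupling_if_surjective[OF surj k] unfolding \<phi>_def by (metis diff_conv_add_uminus)
      moreover have "\<phi> v \<in> cspan (\<phi> ` F)"
        using clinear_on_cspan_image[OF csubspace_direct_sum lin FM] \<open>v \<in> block_kernel k n\<close> F(4) by auto
      ultimately show "y \<in> setsum (E k ` X k) (cspan (\<phi> ` F))" unfolding setsum_def by blast
    qed
  qed
  then have "beta_op (X k) (X k) (E k) \<le> enat (card (\<phi> ` F))"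
    unfolding beta_op_def using F(1) \<phi>X by (intro codim_in_le_card) auto
  also have "\<dots> \<le> enat m" using card_image_le[OF F(1), of \<phi>] F(3) by simp
  also have "\<dots> \<le> (\<Sum>s\<in>{k<..n}. alpha_op (X s) (E s))"
    using cdim_block_kernel_le[of n k] enat by simp
  finally show ?thesis .
qed (use cdim_block_kernel_le[of n k] in simp)

text \<open>\<open>S\<close> annihilates \<open>x - z\<close>.\<close>
lemma kernel_E_eq_0_modulo_if_injective:
  assumes inj: "\<forall>y\<in>direct_sum. S y = 0 \<longrightarrow> y = 0" and k: "k \<in> {1..n}"
    and x: "x \<in> kernel_on (X k) (E k)"
    and z: "z \<in> leading_space (k - 1)" "(\<Sum>i=1..k-1. A i k x) = leading_rows (k - 1) z"
  shows "x = 0"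
proof -
  have xX: "x \<in> X k" and Ex: "E k x = 0" using x unfolding kernel_on_def by auto
  have xM: "x \<in> direct_sum" using in_direct_sum_if_in_X[OF k xX] .
  have zM: "z \<in> direct_sum" using z unfolding leading_space_def by auto
  have row_z: "op_row i z = 0" if "i \<in> {1..n}" "k \<le> i" for i
    using z that unfolding leading_space_def by (intro op_row_eq_0) auto
  have "leading_rows n (x - z) = (\<Sum>i=1..n. op_row i x - op_row i z)"
    unfolding leading_rows_def
    using clinear_on_diff[OF clinear_on_op_row csubspace_direct_sum xM zM] by simp
  also have "\<dots> = (\<Sum>i=1..n. if i < k then A i k x - op_row i z else 0)"
    using op_row_of_X[OF k xX] Ex row_z by (intro sum.cong) auto
  also have "\<dots> = (\<Sum>i=1..k-1. A i k x - op_row i z)"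
    using k by (intro sum.mono_neutral_cong_right) auto
  also have "\<dots> = 0"
    using z(2) unfolding leading_rows_def by (simp add: sum_subtractf)
  finally have "S (x - z) = 0" using S_eq[OF csubspace_diff[OF csubspace_direct_sum xM zM]] by simp
  then have "coord k x = coord k z"
    using inj csubspace_diff[OF csubspace_direct_sum xM zM] by auto
  moreover have "coord k z = 0" using z k unfolding leading_space_def by auto
  ultimately show "x = 0" using coord_of_X[OF k xX, of k] by simp
qed

lemma alpha_E_le_if_injective:
  assumes inj: "\<forall>y\<in>direct_sum. S y = 0 \<longrightarrow> y = 0" and k: "k \<in> {1..n}"
  shows "alpha_op (X k) (E k) \<le> (\<Sum>s=1..k-1. beta_op (X s) (X s) (E s))"
proof (cases "codim_in (leading_rows (k-1) ` leading_space (k-1)) (leading_space (k-1))")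
  case (enat c)
  have kn: "k - 1 \<le> n" using k by auto
  obtain G where G: "finite G" "card G = c"
      "setsum (leading_rows (k-1) ` leading_space (k-1)) (cspan G) = leading_space (k-1)"
    using codim_in_enatE[OF enat] by metis
  define \<psi> where "\<psi> x = (\<Sum>i=1..k-1. A i k x)" for x
  let ?K = "kernel_on (X k) (E k)"
  have lin: "clinear_on ?K \<psi>"
    unfolding clinear_on_def \<psi>_def kernel_on_def
    using clinear_on_add[OF clinear_on_A] clinear_on_scaleC[OF clinear_on_A] k
    by (auto simp: sum.distrib[symmetric] cv.scale_sum_right intro!: sum.cong)
  have "A i k x \<in> leading_space (k-1)" if "i \<in> {1..k-1}" "x \<in> X k" for i x
    using that k by (intro in_leading_space_if_in_X[of i] A_in_X) auto
  then have img: "\<psi> ` ?K \<subseteq> leading_space (k-1)"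
    unfolding \<psi>_def kernel_on_def by (auto intro!: csubspace_sum[OF csubspace_leading_space])
  have "clinear_on (leading_space (k-1)) (leading_rows (k-1))"
    by (rule clinear_on_subset[OF clinear_on_leading_rows[OF kn]]) (auto simp: leading_space_def)
  then have range: "csubspace (leading_rows (k-1) ` leading_space (k-1))"
    by (rule csubspace_image[OF csubspace_leading_space])
  have "\<forall>x\<in>?K. \<psi> x \<in> leading_rows (k-1) ` leading_space (k-1) \<longrightarrow> x = 0"
    unfolding \<psi>_def using kernel_E_eq_0_modulo_if_injective[OF inj k] by blast
  then have "alpha_op (X k) (E k) \<le> enat (card G)"
    unfolding alpha_op_def using img G(3)
    by (intro cdim_le_card_modulo[OF csubspace_kernel_E[OF k] lin range _ G(1)]) auto
  also have "\<dots> \<le> (\<Sum>s=1..k-1. beta_op (X s) (X s) (E s))"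
    using codim_leading_rows_le[OF kn] enat G(2) by simp
  finally show ?thesis .
qed (use codim_leading_rows_le[of "k-1"] k in \<open>simp add: le_diff_conv\<close>)

lemma invertible_E_iff:
  assumes k: "k \<in> {1..n}"
  shows "invertible_on (X k) (X k) (E k) \<longleftrightarrow>
    alpha_op (X k) (E k) = 0 \<and> beta_op (X k) (X k) (E k) = 0"
proof
  assume "alpha_op (X k) (E k) = 0 \<and> beta_op (X k) (X k) (E k) = 0"
  moreover have "0 \<in> E k ` X k" using E_0[OF k] csubspace_0[OF csubspace_X[OF k]] by force
  ultimately show "invertible_on (X k) (X k) (E k)"
    using E_in_X[OF k] cdim_eq_0_iff codim_in_eq_0_iff[of "E k ` X k" "X k"]
    unfolding alpha_op_def beta_op_def
    by (intro invertible_onI[OF closed_csubspace_X[OF k]]) auto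
qed (auto simp: invertible_on_def left_invertible_on_def right_invertible_on_def)

lemma kernel_S_eq_0_if_alpha_E_eq_0:
  assumes "\<forall>k\<in>{1..n}. alpha_op (X k) (E k) = 0"
  shows "kernel_on direct_sum S = {0}"
proof -
  have "cdim (block_kernel 0 n) = 0"
    using cdim_block_kernel_le[of n 0] assms by simp
  then have block: "block_kernel 0 n = {0}" using cdim_eq_0_iff[of "block_kernel 0 n"] by blast
  have "y \<in> block_kernel 0 n" if y: "y \<in> direct_sum" "S y = 0" for y
  proof -
    have "op_row i y = 0" if "i \<in> {0<..n}" for i
      using coord_leading_rows[OF le_refl y(1), of i] S_eq[OF y(1)] y(2) coord_0 that by auto
    then show ?thesis unfolding block_kernel_def using y coord_outside by auto
  qed
  then show ?thesis
    using block clinear_on_0[OF clinear_on_S csubspace_0[OF csubspace_direct_sum]]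
      csubspace_0[OF csubspace_direct_sum] unfolding kernel_on_def by auto
qed

lemma image_S_eq_if_beta_E_eq_0:
  assumes "\<forall>k\<in>{1..n}. beta_op (X k) (X k) (E k) = 0"
  shows "S ` direct_sum = direct_sum"
proof
  have "(\<Sum>s=1..n. beta_op (X s) (X s) (E s)) = 0" using assms by (intro sum.neutral) auto
  then have "codim_in (leading_rows n ` direct_sum) direct_sum = 0"
    using codim_leading_rows_le[of n] leading_space_n by simp
  moreover have "0 \<in> leading_rows n ` direct_sum"
    using clinear_on_0[OF clinear_on_leading_rows[OF le_refl] csubspace_0[OF csubspace_direct_sum]]
      csubspace_0[OF csubspace_direct_sum] by force
  moreover have "leading_rows n ` direct_sum \<subseteq> direct_sum"
    using leading_rows_in_direct_sum[OF le_refl] by blast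
  ultimately have range: "leading_rows n ` direct_sum = direct_sum"
    using codim_in_eq_0_iff[of "leading_rows n ` direct_sum" direct_sum] by simp
  show "direct_sum \<subseteq> S ` direct_sum"
  proof
    fix x assume "x \<in> direct_sum"
    then obtain y where y: "y \<in> direct_sum" "x = leading_rows n y" using range by auto
    then have "S (- y) = x"
      using S_eq[OF csubspace_uminus[OF csubspace_direct_sum y(1)]]
        clinear_on_uminus[OF clinear_on_leading_rows[OF le_refl] y(1)] by simp
    then show "x \<in> S ` direct_sum" using csubspace_uminus[OF csubspace_direct_sum y(1)] by force
  qed
qed (use S_in_direct_sum in blast)

lemma invertible_S_if_invertible_E:
  assumes "\<forall>k\<in>{1..n}. invertible_on (X k) (X k) (E k)"
  shows "invertible_on direct_sum direct_sum S"
proof (rule invertible_onI)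
  show "closed_csubspace direct_sum"
    unfolding closed_csubspace_def using csubspace_direct_sum closed_direct_sum by simp
  show "kernel_on direct_sum S = {0}" "S ` direct_sum = direct_sum"
    using assms invertible_E_iff
    by (auto intro!: kernel_S_eq_0_if_alpha_E_eq_0 image_S_eq_if_beta_E_eq_0)
qed

lemma Delta_iff:
  "\<mu> \<in> Delta n X D \<longleftrightarrow>
     (\<exists>k\<in>{2..n-1}.
        (\<not> right_invertible_on (X k) (X k) (E k) \<and>
           beta_op (X k) (X k) (E k) \<le> (\<Sum>s=k+1..n. alpha_op (X s) (E s)))
      \<or> (\<not> left_invertible_on (X k) (X k) (E k) \<and>
           alpha_op (X k) (E k) \<le> (\<Sum>s=1..k-1. beta_op (X s) (X s) (E s))))
   \<or> (0 < beta_op (X 1) (X 1) (E 1) \<and> beta_op (X 1) (X 1) (E 1) \<le> (\<Sum>s=2..n. alpha_op (X s) (E s)))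
   \<or> (0 < alpha_op (X n) (E n) \<and> alpha_op (X n) (E n) \<le> (\<Sum>s=1..n-1. beta_op (X s) (X s) (E s)))"
proof -
  have conv: "right_invertible_on (X k) (X k) (lam_minus \<mu> (D k)) \<longleftrightarrow> right_invertible_on (X k) (X k) (E k)"
    "left_invertible_on (X k) (X k) (lam_minus \<mu> (D k)) \<longleftrightarrow> left_invertible_on (X k) (X k) (E k)"
    if "k \<in> {2..n-1}" for k
    using invertible_D_iff(1,2)[of k] that by auto
  show ?thesis
    unfolding Delta_def spec_r_def spec_l_def mem_Collect_eq E_def[symmetric]
    by (intro disj_cong bex_cong refl) (simp_all add: conv)
qed

lemma not_invertible_E_if_Delta:
  assumes "1 \<le> n" "\<mu> \<in> Delta n X D"
  shows "\<exists>k\<in>{1..n}. \<not> invertible_on (X k) (X k) (E k)"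
proof -
  from assms(2)[unfolded Delta_iff] consider
    (middle) k where "k \<in> {2..n-1}"
      "\<not> right_invertible_on (X k) (X k) (E k) \<or> \<not> left_invertible_on (X k) (X k) (E k)"
    | (first) "0 < beta_op (X 1) (X 1) (E 1)"
    | (last) "0 < alpha_op (X n) (E n)"
    by blast
  then show ?thesis
  proof cases
    case (middle k)
    then show ?thesis unfolding invertible_on_def by (intro bexI[of _ k]) auto
  next
    case first
    then show ?thesis using assms(1) unfolding invertible_on_def right_invertible_on_def
      by (intro bexI[of _ 1]) auto
  next
    case last
    then show ?thesis using assms(1) unfolding invertible_on_def left_invertible_on_def
      by (intro bexI[of _ n]) auto
  qed
qed

lemma Delta_if_invertible_S:
  assumes k: "k \<in> {1..n}" and E: "\<not> invertible_on (X k) (X k) (E k)"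
    and S: "invertible_on direct_sum direct_sum S"
  shows "\<mu> \<in> Delta n X D"
proof -
  have "\<forall>y\<in>direct_sum. S y = 0 \<longrightarrow> y = 0"
    using kernel_on_eq_0_if_left_invertible S unfolding invertible_on_def kernel_on_def by auto
  from alpha_E_le_if_injective[OF this k]
  have alpha: "alpha_op (X k) (E k) \<le> (\<Sum>s=1..k-1. beta_op (X s) (X s) (E s))" .
  have "S ` direct_sum = direct_sum"
    using image_eq_if_right_invertible[OF _ csubspace_direct_sum clinear_on_S] S S_in_direct_sum
    unfolding invertible_on_def by auto
  from beta_E_le_if_surjective[OF this k]
  have beta: "beta_op (X k) (X k) (E k) \<le> (\<Sum>s=k+1..n. alpha_op (X s) (E s))"
    by (metis Suc_eq_plus1 atLeastSucAtMost_greaterThanAtMost)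
  consider "k = 1" | "k = n" | "k \<in> {2..n-1}" using k by fastforce
  then show ?thesis
  proof cases
    case 1
    then show ?thesis
      using alpha beta E invertible_E_iff[OF k] unfolding Delta_iff by (auto simp: numeral_2_eq_2)
  next
    case 2
    then show ?thesis
      using alpha beta E invertible_E_iff[OF k] unfolding Delta_iff by (auto simp: zero_less_iff_neq_zero)
  next
    case 3
    then show ?thesis
      using alpha beta E unfolding Delta_iff invertible_on_def by blast
  qed
qed

end

theorem mainTheorem15:
  fixes n :: nat and X :: "nat \<Rightarrow> 'h::chilbert_space set" and D :: "nat \<Rightarrow> 'h \<Rightarrow> 'h"
  assumes "n \<ge> 2"
    and "\<forall>k\<in>{1..n}. closed_csubspace (X k) \<and> infinite_dim (X k)"
    and "\<forall>j\<in>{1..n}. \<forall>k\<in>{1..n}. j \<noteq> k \<longrightarrow> (\<forall>x\<in>X j. \<forall>y\<in>X k. cinner x y = 0)"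
    and "\<forall>k\<in>{1..n}. bounded_clinear_on (X k) (X k) (D k)"
  shows "(\<forall>A \<in> Bn n X.
            (\<Union>k\<in>{1..n}. spec (X k) (D k)) = spec (orth_dsum n X) (Tnd n X D A) \<union> Delta n X D)
       \<and> (Delta n X D = {} \<longrightarrow>
            (\<forall>A \<in> Bn n X. (\<Union>k\<in>{1..n}. spec (X k) (D k)) = spec (orth_dsum n X) (Tnd n X D A)))"
proof -
  have "(\<Union>k\<in>{1..n}. spec (X k) (D k)) = spec (orth_dsum n X) (Tnd n X D A) \<union> Delta n X D"
    if A: "A \<in> Bn n X" for A
  proof (rule set_eqI)
    fix \<mu>
    interpret triangular_operator n X D A \<mu>
      using assms(2-4) A unfolding Bn_def by unfold_locales blast+
    have "\<mu> \<in> (\<Union>k\<in>{1..n}. spec (X k) (D k)) \<longleftrightarrow> (\<exists>k\<in>{1..n}. \<not> invertible_on (X k) (X k) (E k))"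
      unfolding spec_def using invertible_D_iff(3) by auto
    moreover have "\<mu> \<in> spec (orth_dsum n X) (Tnd n X D A) \<longleftrightarrow> \<not> invertible_on direct_sum direct_sum S"
      unfolding spec_def direct_sum_def S_def by simp
    ultimately show "\<mu> \<in> (\<Union>k\<in>{1..n}. spec (X k) (D k)) \<longleftrightarrow> \<mu> \<in> spec (orth_dsum n X) (Tnd n X D A) \<union> Delta n X D"
      using invertible_S_if_invertible_E not_invertible_E_if_Delta Delta_if_invertible_S
        \<open>n \<ge> 2\<close> by fastforce
  qed
  then show ?thesis by auto
qed

end
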